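(* Let $(G,P)$ be a quasi-lattice ordered group. Suppose there is a family $\{q_x:x\in G\}\subseteq\mathcal T(G,P)$ of mutually orthogonal projections such that (1) $q_y\in\mathcal D'$ and $T_pq_y=q_{py}T_p$ for all $y\in G$ and $p\in P$, and (2) $\sum_{y\in G}q_y=I$ in the weak operator topology of $B(\ell^2(P))$. Then $(G,P)$ has a FESSPE.
   Context: Quasi-lattice ordered group $(G,P)$: $G$ discrete, $P\subseteq G$ subsemigroup with $P\cap P^{-1}=\{e\}$, and for $x\le y\iff x^{-1}y\in P$ elements with a common upper bound in $P$ have a least one in $P$. $T_s\varepsilon_t=\varepsilon_{st}$ on $\ell^2(P)$ with standard basis $\{\varepsilon_t\}_{t\in P}$; $\mathcal T(G,P)\subseteq B(\ell^2(P))$ is generated by $\{T_s:s\in P\}$; $\mathcal D=\overline{\mathrm{span}}\{T_sT_s^*:s\in P\}$ and $\mathcal D'$ is its commutant in $B(\ell^2(P))$. A FESSPE of $(G,P)$ is a finite set $F\subseteq P\setminus\{e\}$ with $FP=P\setminus\{e\}$. *)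

theory Defs
  imports "HOL-Analysis.Analysis"
begin

text \<open>The discrete group G is modelled by a type of class group_add; the group
operation (written multiplicatively in the paper) is written +, the identity e is 0,
and the inverse of x is -x.  Nothing is assumed about commutativity.\<close>

type_synonym 'g vec = "'g \<Rightarrow> complex"
type_synonym 'g oper = "'g vec \<Rightarrow> 'g vec"

definition quasi_lattice_ordered :: "'g::group_add set \<Rightarrow> bool" where
  "quasi_lattice_ordered P \<longleftrightarrow>
     0 \<in> P \<and> (\<forall>x\<in>P. \<forall>y\<in>P. x + y \<in> P) \<and> P \<inter> uminus ` P = {0} \<and>
     (\<forall>x\<in>P. \<forall>y\<in>P. (\<exists>z\<in>P. -x + z \<in> P \<and> -y + z \<in> P) \<longrightarrow>
        (\<exists>z\<in>P. -x + z \<in> P \<and> -y + z \<in> P \<and>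
           (\<forall>w\<in>P. -x + w \<in> P \<and> -y + w \<in> P \<longrightarrow> -z + w \<in> P)))"

definition has_FESSPE :: "'g::group_add set \<Rightarrow> bool" where
  "has_FESSPE P \<longleftrightarrow> (\<exists>F. finite F \<and> F \<subseteq> P - {0} \<and>
      {f + p | f p. f \<in> F \<and> p \<in> P} = P - {0})"

text \<open>The Hilbert space l^2(P), realised as square summable functions on G vanishing off P.\<close>
definition l2 :: "'g set \<Rightarrow> 'g vec set" where
  "l2 P = {f. (\<forall>t. t \<notin> P \<longrightarrow> f t = 0) \<and> (\<lambda>t. (cmod (f t))^2) summable_on P}"

definition l2norm :: "'g set \<Rightarrow> 'g vec \<Rightarrow> real" where
  "l2norm P f = sqrt (infsum (\<lambda>t. (cmod (f t))^2) P)"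

definition l2inner :: "'g set \<Rightarrow> 'g vec \<Rightarrow> 'g vec \<Rightarrow> complex" where
  "l2inner P f g = infsum (\<lambda>t. f t * cnj (g t)) P"

definition eps :: "'g \<Rightarrow> 'g vec" where
  "eps s = (\<lambda>t. if t = s then 1 else 0)"

text \<open>Bounded operators on l^2(P); normalised to be 0 outside l^2(P) so that
equality of operators is plain function equality.\<close>
definition bdd_op :: "'g set \<Rightarrow> 'g oper \<Rightarrow> bool" where
  "bdd_op P A \<longleftrightarrow>
     (\<forall>f. f \<notin> l2 P \<longrightarrow> A f = (\<lambda>t. 0)) \<and>
     (\<forall>f\<in>l2 P. A f \<in> l2 P) \<and>
     (\<forall>f\<in>l2 P. \<forall>g\<in>l2 P. \<forall>a b. A (\<lambda>t. a * f t + b * g t) = (\<lambda>t. a * A f t + b * A g t)) \<and>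
     (\<exists>C. \<forall>f\<in>l2 P. l2norm P (A f) \<le> C * l2norm P f)"

definition opnorm :: "'g set \<Rightarrow> 'g oper \<Rightarrow> real" where
  "opnorm P A = Sup {l2norm P (A f) | f. f \<in> l2 P \<and> l2norm P f \<le> 1}"

definition adj :: "'g set \<Rightarrow> 'g oper \<Rightarrow> 'g oper" where
  "adj P A = (\<lambda>g. if g \<in> l2 P then
       (\<lambda>s. if s \<in> P then infsum (\<lambda>t. g t * cnj (A (eps s) t)) P else 0) else (\<lambda>t. 0))"

definition op_add :: "'g oper \<Rightarrow> 'g oper \<Rightarrow> 'g oper" where
  "op_add A B = (\<lambda>f t. A f t + B f t)"

definition op_diff :: "'g oper \<Rightarrow> 'g oper \<Rightarrow> 'g oper" where
  "op_diff A B = (\<lambda>f t. A f t - B f t)"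

definition op_scale :: "complex \<Rightarrow> 'g oper \<Rightarrow> 'g oper" where
  "op_scale c A = (\<lambda>f t. c * A f t)"

text \<open>The isometry T_s: T_s eps_t = eps_{st}, i.e. (T_s f)(u) = f(s^{-1}u) if s^{-1}u \<in> P.\<close>
definition Tgen :: "'g::group_add set \<Rightarrow> 'g \<Rightarrow> 'g oper" where
  "Tgen P s = (\<lambda>f. if f \<in> l2 P then (\<lambda>u. if -s + u \<in> P then f (-s + u) else 0) else (\<lambda>t. 0))"

inductive_set star_alg :: "'g::group_add set \<Rightarrow> 'g oper set" for P where
  gen: "s \<in> P \<Longrightarrow> Tgen P s \<in> star_alg P"
| adj: "A \<in> star_alg P \<Longrightarrow> adj P A \<in> star_alg P"
| comp: "A \<in> star_alg P \<Longrightarrow> B \<in> star_alg P \<Longrightarrow> A \<circ> B \<in> star_alg P"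
| add: "A \<in> star_alg P \<Longrightarrow> B \<in> star_alg P \<Longrightarrow> op_add A B \<in> star_alg P"
| scale: "A \<in> star_alg P \<Longrightarrow> op_scale c A \<in> star_alg P"

definition norm_closure :: "'g set \<Rightarrow> 'g oper set \<Rightarrow> 'g oper set" where
  "norm_closure P S = {A. bdd_op P A \<and> (\<forall>e>0. \<exists>B\<in>S. opnorm P (op_diff A B) < e)}"

definition Toeplitz :: "'g::group_add set \<Rightarrow> 'g oper set" where
  "Toeplitz P = norm_closure P (star_alg P)"

definition Dspan :: "'g::group_add set \<Rightarrow> 'g oper set" where
  "Dspan P = {(\<lambda>f t. \<Sum>s\<in>F. c s * (Tgen P s \<circ> adj P (Tgen P s)) f t) | F c. finite F \<and> F \<subseteq> P}"

definition Dalg :: "'g::group_add set \<Rightarrow> 'g oper set" where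
  "Dalg P = norm_closure P (Dspan P)"

definition Dcomm :: "'g::group_add set \<Rightarrow> 'g oper set" where
  "Dcomm P = {A. bdd_op P A \<and> (\<forall>D\<in>Dalg P. A \<circ> D = D \<circ> A)}"

definition is_proj :: "'g set \<Rightarrow> 'g oper \<Rightarrow> bool" where
  "is_proj P q \<longleftrightarrow> bdd_op P q \<and> q \<circ> q = q \<and> adj P q = q"

end

theory Submission
  imports Defs
begin

text \<open>
Every element of the *-algebra generated by the T_s is a finite sum of operators c T_a T_b^*
(a, b \<in> P), because Nica covariance rewrites T_b^* T_a' as T_{b^{-1} m} T_{a'^{-1} m}^* with
m = b \<or> a', or as 0 when b and a' have no common upper bound.

Each q_y commutes with the range projections T_u T_u^*; for u \<noteq> e these kill \<epsilon>_e, so q_y maps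
\<epsilon>_e to \<alpha>_y \<epsilon>_e with \<alpha>_y \<in> {0, 1}. Since the \<alpha>_y sum to 1, some q_y fixes \<epsilon>_e, and then
covariance gives q_{py} \<epsilon>_p = \<epsilon>_p, so orthogonality forces the diagonal entry of q_y at p \<noteq> e to
vanish. Approximate q_y within 1/2 by a finite sum \<Sigma> c T_a T_b^*: its diagonal entries at p and at e
agree unless p \<ge> a for one of the finitely many a \<noteq> e that occur, and these a form a FESSPE.
\<close>

definition plus_closed :: "'g::group_add set \<Rightarrow> bool" where
  "plus_closed P \<longleftrightarrow> (\<forall>x\<in>P. \<forall>y\<in>P. x + y \<in> P)"

lemma plus_closedD: "plus_closed P \<Longrightarrow> x \<in> P \<Longrightarrow> y \<in> P \<Longrightarrow> x + y \<in> P"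
  by (simp add: plus_closed_def)

lemma quasi_lattice_ordered_plus_closed: "quasi_lattice_ordered P \<Longrightarrow> plus_closed P"
  by (simp add: quasi_lattice_ordered_def plus_closed_def)

lemma quasi_lattice_ordered_zero: "quasi_lattice_ordered P \<Longrightarrow> 0 \<in> P"
  by (simp add: quasi_lattice_ordered_def)

lemma quasi_lattice_ordered_minus_eq_zero:
  assumes "quasi_lattice_ordered P" "a \<in> P" "-a \<in> P"
  shows "a = 0"
proof -
  have "a \<in> uminus ` P" using assms(3) by (rule rev_image_eqI) simp
  thus ?thesis using assms(1,2) by (auto simp: quasi_lattice_ordered_def)
qed

lemma quasi_lattice_ordered_lub:
  assumes "quasi_lattice_ordered P" "b \<in> P" "c \<in> P" "\<exists>z\<in>P. -b + z \<in> P \<and> -c + z \<in> P"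
  shows "\<exists>m\<in>P. -b + m \<in> P \<and> -c + m \<in> P \<and> (\<forall>w\<in>P. -b + w \<in> P \<and> -c + w \<in> P \<longrightarrow> -m + w \<in> P)"
  using assms unfolding quasi_lattice_ordered_def by blast

lemma l2_zero [simp]: "(\<lambda>t. 0) \<in> l2 P"
  by (simp add: l2_def)

lemma l2_vanishes: "f \<in> l2 P \<Longrightarrow> t \<notin> P \<Longrightarrow> f t = 0"
  by (simp add: l2_def)

lemma l2_summable: "f \<in> l2 P \<Longrightarrow> (\<lambda>t. (cmod (f t))^2) summable_on P"
  by (simp add: l2_def)

lemma l2norm_nonneg: "l2norm P f \<ge> 0"
  by (simp add: l2norm_def infsum_nonneg)

lemma l2norm_sq: "(l2norm P f)^2 = infsum (\<lambda>t. (cmod (f t))^2) P"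
  by (simp add: l2norm_def infsum_nonneg)

lemma eps_l2: "s \<in> P \<Longrightarrow> eps s \<in> l2 P"
proof -
  assume s: "s \<in> P"
  have "(\<lambda>t. (cmod (eps s t))^2) summable_on P \<longleftrightarrow> (\<lambda>t. (cmod (eps s t))^2) summable_on {s}"
    by (rule summable_on_cong_neutral) (use s in \<open>auto simp: eps_def\<close>)
  thus ?thesis using s by (auto simp: l2_def eps_def)
qed

lemma has_sum_indicator_point:
  fixes v :: "'b::{comm_monoid_add,topological_space}"
  shows "((\<lambda>t. if t = t0 then v else 0) has_sum (if t0 \<in> P then v else 0)) P"
proof (cases "t0 \<in> P")
  case True
  have "((\<lambda>t. if t = t0 then v else 0) has_sum v) P \<longleftrightarrow> ((\<lambda>t. if t = t0 then v else 0) has_sum v) {t0}"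
    by (rule has_sum_cong_neutral) (use True in auto)
  moreover have "((\<lambda>t. if t = t0 then v else 0) has_sum v) {t0}"
    using has_sum_finite[of "{t0}" "\<lambda>t. if t = t0 then v else 0"] by simp
  ultimately show ?thesis using True by simp
next
  case False
  have "((\<lambda>t. if t = t0 then v else 0) has_sum 0) P \<longleftrightarrow> ((\<lambda>t. if t = t0 then v else 0) has_sum 0) {}"
    by (rule has_sum_cong_neutral) (use False in auto)
  then show ?thesis using False by simp
qed

lemma l2norm_eps: "x \<in> P \<Longrightarrow> l2norm P (eps x) = 1"
proof -
  assume "x \<in> P"
  have "(\<lambda>t. (cmod (eps x t))^2) = (\<lambda>t. if t = x then 1 else (0::real))"
    by (auto simp: eps_def)
  thus ?thesis using infsumI[OF has_sum_indicator_point[of x "1::real" P]] \<open>x \<in> P\<close>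
    by (simp add: l2norm_def)
qed

lemma l2inner_eps: "s \<in> P \<Longrightarrow> l2inner P h (eps s) = h s"
proof -
  assume "s \<in> P"
  have "(\<lambda>t. h t * cnj (eps s t)) = (\<lambda>t. if t = s then h s else 0)"
    by (auto simp: eps_def)
  thus ?thesis using infsumI[OF has_sum_indicator_point[of s "h s" P]] \<open>s \<in> P\<close>
    by (simp add: l2inner_def)
qed

lemma cmod_le_l2norm:
  assumes "h \<in> l2 P" "x \<in> P"
  shows "cmod (h x) \<le> l2norm P h"
proof -
  have "(\<Sum>t\<in>{x}. (cmod (h t))^2) \<le> infsum (\<lambda>t. (cmod (h t))^2) P"
    by (rule finite_sum_le_infsum) (use assms in \<open>auto simp: l2_summable\<close>)
  hence "sqrt ((cmod (h x))^2) \<le> l2norm P h"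
    unfolding l2norm_def by (simp del: real_sqrt_abs add: real_sqrt_le_mono)
  thus ?thesis by simp
qed

lemma cmod_lincomb_sq_le:
  "(cmod (a*x + b*y))^2 \<le> 2*(cmod a)^2*(cmod x)^2 + 2*(cmod b)^2*(cmod y)^2"
proof -
  have "cmod (a*x + b*y) \<le> cmod a * cmod x + cmod b * cmod y"
    by (metis norm_mult norm_triangle_ineq)
  hence "(cmod (a*x + b*y))^2 \<le> (cmod a * cmod x + cmod b * cmod y)^2"
    by (simp add: power_mono)
  also have "\<dots> \<le> 2*(cmod a * cmod x)^2 + 2*(cmod b * cmod y)^2"
    using zero_le_power2[of "cmod a * cmod x - cmod b * cmod y"]
    unfolding power2_diff power2_sum by linarith
  finally show ?thesis by (simp add: power_mult_distrib)
qed

lemma l2_lincomb: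
  assumes "f \<in> l2 P" "g \<in> l2 P"
  shows "(\<lambda>t. a * f t + b * g t) \<in> l2 P"
    and "(l2norm P (\<lambda>t. a * f t + b * g t))^2 \<le>
           2*(cmod a)^2 * (l2norm P f)^2 + 2*(cmod b)^2 * (l2norm P g)^2"
proof -
  let ?h = "\<lambda>t. 2*(cmod a)^2*(cmod (f t))^2 + 2*(cmod b)^2*(cmod (g t))^2"
  have h: "?h summable_on P"
    using assms by (intro summable_on_add summable_on_cmult_right l2_summable)
  have bound: "(cmod (a * f t + b * g t))^2 \<le> ?h t" for t
    by (rule cmod_lincomb_sq_le)
  have sum: "(\<lambda>t. (cmod (a * f t + b * g t))^2) summable_on P"
    by (rule summable_on_comparison_test[OF h bound]) simp
  then show "(\<lambda>t. a * f t + b * g t) \<in> l2 P"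
    using assms by (simp add: l2_def)
  have "(l2norm P (\<lambda>t. a * f t + b * g t))^2 \<le> infsum ?h P"
    unfolding l2norm_sq using sum h bound by (rule infsum_mono)
  also have "\<dots> = 2*(cmod a)^2 * (l2norm P f)^2 + 2*(cmod b)^2 * (l2norm P g)^2"
    using assms
    by (simp add: l2norm_sq infsum_add summable_on_cmult_right l2_summable infsum_cmult_right mult.assoc)
  finally show "(l2norm P (\<lambda>t. a * f t + b * g t))^2 \<le>
      2*(cmod a)^2 * (l2norm P f)^2 + 2*(cmod b)^2 * (l2norm P g)^2" .
qed

text \<open>A triple (c, a, b) encodes the operator c T_a T_b^*; a list of triples encodes their sum.\<close>

definition Tterm :: "'g::group_add set \<Rightarrow> complex \<times> 'g \<times> 'g \<Rightarrow> 'g oper" where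
  "Tterm P x f u = (case x of (c, a, b) \<Rightarrow> c * (if -a + u \<in> P then f (b + (-a + u)) else 0))"

definition Tpoly :: "'g::group_add set \<Rightarrow> (complex \<times> 'g \<times> 'g) list \<Rightarrow> 'g oper" where
  "Tpoly P L f = (if f \<in> l2 P then (\<lambda>u. \<Sum>x\<leftarrow>L. Tterm P x f u) else (\<lambda>t. 0))"

definition terms_in :: "'g set \<Rightarrow> (complex \<times> 'g \<times> 'g) list \<Rightarrow> bool" where
  "terms_in P L \<longleftrightarrow> (\<forall>(c, a, b)\<in>set L. a \<in> P \<and> b \<in> P)"

lemma Tterm_l2:
  fixes P :: "'g::group_add set"
  assumes cl: "plus_closed P" and ab: "a \<in> P" "b \<in> P" and f: "f \<in> l2 P"
  shows "Tterm P (c, a, b) f \<in> l2 P"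
    and "(l2norm P (Tterm P (c, a, b) f))^2 \<le> (cmod c)^2 * (l2norm P f)^2"
proof -
  define A where "A = {u. -a + u \<in> P}"
  define \<phi> where "\<phi> = (\<lambda>u. b + (-a + u))"
  define g where "g = (\<lambda>t. (cmod (f t))^2)"
  have AP: "A \<subseteq> P"
    using plus_closedD[OF cl ab(1)] by (force simp: A_def add.assoc[symmetric])
  have inj: "inj_on \<phi> A" by (auto simp: inj_on_def \<phi>_def)
  have \<phi>A: "\<phi> ` A \<subseteq> P"
    using plus_closedD[OF cl ab(2)] by (auto simp: A_def \<phi>_def)
  have g: "g summable_on P" using f by (simp add: g_def l2_summable)
  have g\<phi>A: "g summable_on (\<phi> ` A)" using summable_on_subset_banach[OF g \<phi>A] .
  have eq: "(\<lambda>u. (cmod (Tterm P (c, a, b) f u))^2) =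
      (\<lambda>u. (cmod c)^2 * (if u \<in> A then (g \<circ> \<phi>) u else 0))"
    by (auto simp: Tterm_def A_def g_def \<phi>_def norm_mult power_mult_distrib)
  have summ: "(\<lambda>u. if u \<in> A then (g \<circ> \<phi>) u else 0) summable_on P \<longleftrightarrow> (g \<circ> \<phi>) summable_on A"
    by (rule summable_on_cong_neutral) (use AP in auto)
  have sum: "infsum (\<lambda>u. if u \<in> A then (g \<circ> \<phi>) u else 0) P = infsum (g \<circ> \<phi>) A"
    by (rule infsum_cong_neutral) (use AP in auto)
  have "(g \<circ> \<phi>) summable_on A"
    using summable_on_reindex[OF inj, of g] g\<phi>A by blast
  then have "(\<lambda>u. (cmod (Tterm P (c, a, b) f u))^2) summable_on P"
    unfolding eq using summ by (intro summable_on_cmult_right) simp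
  moreover have "\<forall>t. t \<notin> P \<longrightarrow> Tterm P (c, a, b) f t = 0"
    using AP by (auto simp: Tterm_def A_def)
  ultimately show "Tterm P (c, a, b) f \<in> l2 P" by (simp add: l2_def)
  have "infsum (g \<circ> \<phi>) A = infsum g (\<phi> ` A)" using infsum_reindex[OF inj, of g] by simp
  also have "\<dots> \<le> infsum g P"
    by (rule infsum_mono2[OF g\<phi>A g \<phi>A]) (simp add: g_def)
  finally have "infsum (g \<circ> \<phi>) A \<le> (l2norm P f)^2" by (simp add: l2norm_sq g_def)
  then show "(l2norm P (Tterm P (c, a, b) f))^2 \<le> (cmod c)^2 * (l2norm P f)^2"
    unfolding l2norm_sq eq infsum_cmult_right' sum[unfolded l2norm_sq]
    by (simp add: l2norm_sq mult_left_mono)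
qed

fun Tpoly_bound :: "(complex \<times> 'g \<times> 'g) list \<Rightarrow> real" where
  "Tpoly_bound [] = 0"
| "Tpoly_bound ((c, a, b) # L) = 2 * (cmod c)^2 + 2 * Tpoly_bound L"

lemma Tpoly_bound_nonneg: "Tpoly_bound L \<ge> 0"
  by (induction L rule: Tpoly_bound.induct) auto

lemma Tpoly_l2_bound:
  assumes cl: "plus_closed P" and L: "terms_in P L" and f: "f \<in> l2 P"
  shows "Tpoly P L f \<in> l2 P \<and> (l2norm P (Tpoly P L f))^2 \<le> Tpoly_bound L * (l2norm P f)^2"
  using L
proof (induction L)
  case Nil
  then show ?case using f by (simp add: Tpoly_def l2norm_def)
next
  case (Cons x L)
  obtain c a b where x: "x = (c, a, b)" by (cases x)
  have ab: "a \<in> P" "b \<in> P" and L: "terms_in P L" using Cons.prems x by (auto simp: terms_in_def)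
  let ?h = "Tterm P (c, a, b) f" and ?g = "Tpoly P L f"
  have split: "Tpoly P (x # L) f = (\<lambda>t. 1 * ?h t + 1 * ?g t)"
    using f by (simp add: Tpoly_def x)
  have "(l2norm P (Tpoly P (x # L) f))^2 \<le> 2 * (l2norm P ?h)^2 + 2 * (l2norm P ?g)^2"
    unfolding split
    using l2_lincomb(2)[OF Tterm_l2(1)[OF cl ab f] conjunct1[OF Cons.IH[OF L]], where a=1 and b=1]
    by simp
  also have "\<dots> \<le> 2 * ((cmod c)^2 * (l2norm P f)^2) + 2 * (Tpoly_bound L * (l2norm P f)^2)"
    using Tterm_l2(2)[OF cl ab f, where c=c] Cons.IH[OF L] by linarith
  also have "\<dots> = Tpoly_bound (x # L) * (l2norm P f)^2" by (simp add: x algebra_simps)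
  finally show ?case
    unfolding split using l2_lincomb(1)[OF Tterm_l2(1)[OF cl ab f] conjunct1[OF Cons.IH[OF L]]] by blast
qed

lemma Tterm_lincomb: "Tterm P x (\<lambda>t. a * f t + b * g t) u = a * Tterm P x f u + b * Tterm P x g u"
  by (cases x) (auto simp: Tterm_def algebra_simps)

lemma bdd_op_Tpoly:
  assumes cl: "plus_closed P" and L: "terms_in P L"
  shows "bdd_op P (Tpoly P L)"
  unfolding bdd_op_def
proof (intro conjI)
  show "\<forall>f. f \<notin> l2 P \<longrightarrow> Tpoly P L f = (\<lambda>t. 0)" by (simp add: Tpoly_def)
  show "\<forall>f\<in>l2 P. Tpoly P L f \<in> l2 P" using Tpoly_l2_bound[OF cl L] by blast
  show "\<forall>f\<in>l2 P. \<forall>g\<in>l2 P. \<forall>a b. Tpoly P L (\<lambda>t. a * f t + b * g t) = (\<lambda>t. a * Tpoly P L f t + b * Tpoly P L g t)"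
  proof (intro ballI allI)
    fix f g a b assume "f \<in> l2 P" "g \<in> l2 P"
    then show "Tpoly P L (\<lambda>t. a * f t + b * g t) = (\<lambda>t. a * Tpoly P L f t + b * Tpoly P L g t)"
      using l2_lincomb(1)[of f P g a b]
      by (simp add: Tpoly_def Tterm_lincomb sum_list_addf sum_list_const_mult)
  qed
  show "\<exists>C. \<forall>f\<in>l2 P. l2norm P (Tpoly P L f) \<le> C * l2norm P f"
  proof (intro exI ballI)
    fix f assume "f \<in> l2 P"
    then have "(l2norm P (Tpoly P L f))^2 \<le> (sqrt (Tpoly_bound L) * l2norm P f)^2"
      using Tpoly_l2_bound[OF cl L] by (simp add: power_mult_distrib Tpoly_bound_nonneg)
    then show "l2norm P (Tpoly P L f) \<le> sqrt (Tpoly_bound L) * l2norm P f"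
      by (rule power2_le_imp_le) (simp add: l2norm_nonneg Tpoly_bound_nonneg)
  qed
qed

definition has_common_ub :: "'g::group_add set \<Rightarrow> 'g \<Rightarrow> 'g \<Rightarrow> bool" where
  "has_common_ub P b c \<longleftrightarrow> (\<exists>z\<in>P. -b + z \<in> P \<and> -c + z \<in> P)"

definition lub :: "'g::group_add set \<Rightarrow> 'g \<Rightarrow> 'g \<Rightarrow> 'g" where
  "lub P b c = (SOME m. m \<in> P \<and> -b + m \<in> P \<and> -c + m \<in> P \<and>
                        (\<forall>w\<in>P. -b + w \<in> P \<and> -c + w \<in> P \<longrightarrow> -m + w \<in> P))"

lemma lub_is_lub:
  assumes "quasi_lattice_ordered P" "b \<in> P" "c \<in> P" "has_common_ub P b c"
  shows "lub P b c \<in> P" "-b + lub P b c \<in> P" "-c + lub P b c \<in> P"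
    and "\<And>w. w \<in> P \<Longrightarrow> -b + w \<in> P \<Longrightarrow> -c + w \<in> P \<Longrightarrow> -lub P b c + w \<in> P"
proof -
  have "\<exists>m. m \<in> P \<and> -b + m \<in> P \<and> -c + m \<in> P \<and> (\<forall>w\<in>P. -b + w \<in> P \<and> -c + w \<in> P \<longrightarrow> -m + w \<in> P)"
    using quasi_lattice_ordered_lub[OF assms(1-3)] assms(4) unfolding has_common_ub_def by blast
  from someI_ex[OF this] show "lub P b c \<in> P" "-b + lub P b c \<in> P" "-c + lub P b c \<in> P"
    and "\<And>w. w \<in> P \<Longrightarrow> -b + w \<in> P \<Longrightarrow> -c + w \<in> P \<Longrightarrow> -lub P b c + w \<in> P"
    unfolding lub_def by blast+
qed

definition term_mult ::
    "'g::group_add set \<Rightarrow> complex \<times> 'g \<times> 'g \<Rightarrow> complex \<times> 'g \<times> 'g \<Rightarrow> (complex \<times> 'g \<times> 'g) list" where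
  "term_mult P x y = (case x of (c, a, b) \<Rightarrow> case y of (d, a', b') \<Rightarrow>
     if has_common_ub P b a' then [(c * d, a + (-b + lub P b a'), b' + (-a' + lub P b a'))] else [])"

definition Tpoly_mult :: "'g::group_add set \<Rightarrow> (complex \<times> 'g \<times> 'g) list \<Rightarrow>
    (complex \<times> 'g \<times> 'g) list \<Rightarrow> (complex \<times> 'g \<times> 'g) list" where
  "Tpoly_mult P L1 L2 = concat (map (\<lambda>x. concat (map (term_mult P x) L2)) L1)"

lemma Tterm_Tterm:
  assumes qlo: "quasi_lattice_ordered P" and P: "b \<in> P" "a' \<in> P"
  shows "Tterm P (c, a, b) (Tterm P (d, a', b') f) u =
    (\<Sum>z\<leftarrow>term_mult P (c, a, b) (d, a', b'). Tterm P z f u)"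
proof (cases "has_common_ub P b a'")
  case True
  define m where "m = lub P b a'"
  note m = lub_is_lub[OF qlo P True, folded m_def]
  have cl: "plus_closed P" using quasi_lattice_ordered_plus_closed[OF qlo] .
  define v where "v = -a + u"
  have cond: "v \<in> P \<and> -a' + (b + v) \<in> P \<longleftrightarrow> -m + (b + v) \<in> P"
  proof
    assume h: "v \<in> P \<and> -a' + (b + v) \<in> P"
    then have "b + v \<in> P" "-b + (b + v) \<in> P" using plus_closedD[OF cl P(1)] by (auto simp: add.assoc[symmetric])
    then show "-m + (b + v) \<in> P" using m(4) h by blast
  next
    assume h: "-m + (b + v) \<in> P"
    have "(-b + m) + (-m + (b + v)) \<in> P" "(-a' + m) + (-m + (b + v)) \<in> P"
      using plus_closedD[OF cl] m(2,3) h by blast+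
    then show "v \<in> P \<and> -a' + (b + v) \<in> P" by (simp_all add: add.assoc)
  qed
  have "-(a + (-b + m)) + u = -m + (b + v)"
    by (simp add: v_def minus_add add.assoc del: add_uminus_conv_diff)
  moreover have "b' + (-a' + m) + (-m + (b + v)) = b' + (-a' + (b + v))"
    by (simp add: add.assoc)
  ultimately show ?thesis
    using cond unfolding term_mult_def Tterm_def
    by (simp add: True m_def[symmetric] v_def[symmetric]) blast
next
  case False
  have cl: "plus_closed P" using quasi_lattice_ordered_plus_closed[OF qlo] .
  have "\<not> (-a + u \<in> P \<and> -a' + (b + (-a + u)) \<in> P)"
  proof
    assume h: "-a + u \<in> P \<and> -a' + (b + (-a + u)) \<in> P"
    then have "b + (-a + u) \<in> P" "-b + (b + (-a + u)) \<in> P"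
      using plus_closedD[OF cl P(1)] by (auto simp only: minus_add_cancel)
    then show False using False h unfolding has_common_ub_def by blast
  qed
  then show ?thesis unfolding term_mult_def Tterm_def by (auto simp: False)
qed

lemma terms_in_Tpoly_mult:
  assumes qlo: "quasi_lattice_ordered P" and L1: "terms_in P L1" and L2: "terms_in P L2"
  shows "terms_in P (Tpoly_mult P L1 L2)"
  unfolding terms_in_def Tpoly_mult_def
proof clarsimp
  fix c a b x y
  assume x: "x \<in> set L1" and y: "y \<in> set L2" and z: "(c, a, b) \<in> set (term_mult P x y)"
  obtain c1 a1 b1 c2 a2 b2 where xy: "x = (c1, a1, b1)" "y = (c2, a2, b2)" by (cases x, cases y)
  have P: "a1 \<in> P" "b1 \<in> P" "a2 \<in> P" "b2 \<in> P"
    using x y L1 L2 unfolding xy terms_in_def by auto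
  have ub: "has_common_ub P b1 a2" and abc: "a = a1 + (-b1 + lub P b1 a2)" "b = b2 + (-a2 + lub P b1 a2)"
    using z unfolding xy term_mult_def by (auto split: if_splits)
  show "a \<in> P \<and> b \<in> P"
    using lub_is_lub(2,3)[OF qlo P(2,3) ub] P quasi_lattice_ordered_plus_closed[OF qlo]
    unfolding abc by (simp add: plus_closedD)
qed

lemma Tterm_zero [simp]: "Tterm P x (\<lambda>w. 0) = (\<lambda>u. 0)"
  by (cases x) (auto simp: Tterm_def)

lemma Tterm_sum_list: "Tterm P x (\<lambda>w. \<Sum>y\<leftarrow>L. F y w) u = (\<Sum>y\<leftarrow>L. Tterm P x (F y) u)"
  by (induction L) (simp_all add: Tterm_lincomb[where a=1 and b=1, simplified])

lemma sum_list_concat: "sum_list (concat xss) = sum_list (map sum_list xss)"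
  for xss :: "'a::monoid_add list list"
  by (induction xss) auto

lemma Tpoly_comp:
  assumes qlo: "quasi_lattice_ordered P" and L1: "terms_in P L1" and L2: "terms_in P L2"
  shows "Tpoly P L1 \<circ> Tpoly P L2 = Tpoly P (Tpoly_mult P L1 L2)"
proof
  fix f
  show "(Tpoly P L1 \<circ> Tpoly P L2) f = Tpoly P (Tpoly_mult P L1 L2) f"
  proof (cases "f \<in> l2 P")
    case False
    then show ?thesis by (simp add: Tpoly_def)
  next
    case True
    have "Tpoly P L2 f \<in> l2 P"
      using Tpoly_l2_bound[OF quasi_lattice_ordered_plus_closed[OF qlo] L2 True] by blast
    then have "(Tpoly P L1 \<circ> Tpoly P L2) f = (\<lambda>u. \<Sum>x\<leftarrow>L1. \<Sum>y\<leftarrow>L2. Tterm P x (Tterm P y f) u)"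
      using True by (simp add: Tpoly_def Tterm_sum_list)
    also have "\<dots> = (\<lambda>u. \<Sum>x\<leftarrow>L1. \<Sum>y\<leftarrow>L2. \<Sum>z\<leftarrow>term_mult P x y. Tterm P z f u)"
    proof (intro ext arg_cong[where f=sum_list] map_cong refl)
      fix u x y assume x: "x \<in> set L1" and y: "y \<in> set L2"
      obtain c1 a1 b1 c2 a2 b2 where xy: "x = (c1, a1, b1)" "y = (c2, a2, b2)" by (cases x, cases y)
      have "b1 \<in> P" "a2 \<in> P" using x y L1 L2 unfolding xy terms_in_def by auto
      then show "Tterm P x (Tterm P y f) u = (\<Sum>z\<leftarrow>term_mult P x y. Tterm P z f u)"
        unfolding xy by (rule Tterm_Tterm[OF qlo])
    qed
    also have "\<dots> = Tpoly P (Tpoly_mult P L1 L2) f"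
      using True by (simp add: Tpoly_def Tpoly_mult_def sum_list_concat map_concat comp_def)
    finally show ?thesis .
  qed
qed

definition term_adj :: "complex \<times> 'g \<times> 'g \<Rightarrow> complex \<times> 'g \<times> 'g" where
  "term_adj x = (case x of (c, a, b) \<Rightarrow> (cnj c, b, a))"

lemma has_sum_Tterm_adj:
  assumes g: "g \<in> l2 P" and cl: "plus_closed P" and a: "a \<in> P"
  shows "((\<lambda>t. g t * cnj (Tterm P (c, a, b) (eps s) t)) has_sum Tterm P (term_adj (c, a, b)) g s) P"
proof -
  define t0 where "t0 = a + (-b + s)"
  have t0: "b + (-a + t) = s \<longleftrightarrow> t = t0" for t
    unfolding t0_def by (metis add_minus_cancel minus_add_cancel)
  have pointwise: "g t * cnj (Tterm P (c, a, b) (eps s) t) =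
      (if t = t0 then (if -b + s \<in> P then g t0 * cnj c else 0) else 0)" for t
    by (cases "t = t0") (simp_all add: Tterm_def eps_def t0, simp add: t0_def)
  have entry: "(if t0 \<in> P then (if -b + s \<in> P then g t0 * cnj c else 0) else 0) =
      Tterm P (term_adj (c, a, b)) g s"
    using plus_closedD[OF cl a] by (auto simp: Tterm_def term_adj_def t0_def mult.commute)
  show ?thesis
    unfolding pointwise entry[symmetric] by (rule has_sum_indicator_point)
qed

lemma adj_Tpoly:
  assumes cl: "plus_closed P" and L: "terms_in P L"
  shows "adj P (Tpoly P L) = Tpoly P (map term_adj L)"
proof (intro ext)
  fix g s
  show "adj P (Tpoly P L) g s = Tpoly P (map term_adj L) g s"
  proof (cases "g \<in> l2 P \<and> s \<in> P")
    case True
    then have "((\<lambda>t. g t * cnj (\<Sum>x\<leftarrow>L. Tterm P x (eps s) t)) has_sum (\<Sum>x\<leftarrow>L. Tterm P (term_adj x) g s)) P"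
      using L
    proof (induction L)
      case (Cons x L)
      obtain c a b where x: "x = (c, a, b)" by (cases x)
      have "a \<in> P" "terms_in P L" using Cons.prems(2) by (auto simp: terms_in_def x)
      from has_sum_add[OF has_sum_Tterm_adj[OF _ cl this(1)] Cons.IH[OF Cons.prems(1) this(2)]]
      show ?case using Cons.prems(1) by (simp add: x distrib_left)
    qed simp
    then show ?thesis
      using True eps_l2[of s P] by (simp add: adj_def Tpoly_def comp_def infsumI)
  next
    case False
    have "Tterm P (term_adj x) g s = 0" if "x \<in> set L" "s \<notin> P" for x
    proof -
      obtain c a b where x: "x = (c, a, b)" and b: "b \<in> P" using L \<open>x \<in> set L\<close> by (cases x) (auto simp: terms_in_def)
      have "-b + s \<notin> P" using plus_closedD[OF cl b, of "-b + s"] \<open>s \<notin> P\<close> by (auto simp: add.assoc[symmetric])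
      then show ?thesis by (simp add: x Tterm_def term_adj_def)
    qed
    then have "(\<Sum>x\<leftarrow>L. Tterm P (term_adj x) g s) = (\<Sum>x\<leftarrow>L. 0)" if "s \<notin> P"
      using that by (intro arg_cong[where f=sum_list] map_cong) auto
    then show ?thesis using False by (auto simp: adj_def Tpoly_def comp_def)
  qed
qed

definition term_scale :: "complex \<Rightarrow> complex \<times> 'g \<times> 'g \<Rightarrow> complex \<times> 'g \<times> 'g" where
  "term_scale c x = (case x of (d, a, b) \<Rightarrow> (c * d, a, b))"

lemma Tgen_eq_Tpoly: "Tgen P s = Tpoly P [(1, s, 0)]"
  by (auto simp: fun_eq_iff Tgen_def Tpoly_def Tterm_def)

lemma op_add_Tpoly: "op_add (Tpoly P L1) (Tpoly P L2) = Tpoly P (L1 @ L2)"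
  by (auto simp: fun_eq_iff op_add_def Tpoly_def)

lemma op_scale_Tpoly: "op_scale c (Tpoly P L) = Tpoly P (map (term_scale c) L)"
proof -
  have "c * (\<Sum>x\<leftarrow>L. Tterm P x f u) = (\<Sum>x\<leftarrow>map (term_scale c) L. Tterm P x f u)" for f u
    by (induction L) (auto simp: Tterm_def term_scale_def algebra_simps split: prod.split)
  then show ?thesis by (auto simp: fun_eq_iff op_scale_def Tpoly_def)
qed

lemma star_alg_eq_Tpoly:
  assumes qlo: "quasi_lattice_ordered P" and B: "B \<in> star_alg P"
  shows "\<exists>L. terms_in P L \<and> B = Tpoly P L"
  using B
proof (induction rule: star_alg.induct)
  case (gen s)
  then show ?case using quasi_lattice_ordered_zero[OF qlo]
    by (intro exI[of _ "[(1, s, 0)]"]) (auto simp: terms_in_def Tgen_eq_Tpoly)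
next
  case (adj A)
  then obtain L where "terms_in P L" "A = Tpoly P L" by blast
  then show ?case using adj_Tpoly[OF quasi_lattice_ordered_plus_closed[OF qlo]]
    by (intro exI[of _ "map term_adj L"]) (auto simp: terms_in_def term_adj_def)
next
  case (comp A B)
  then obtain L1 L2 where "terms_in P L1" "A = Tpoly P L1" "terms_in P L2" "B = Tpoly P L2" by blast
  then show ?case using Tpoly_comp[OF qlo] terms_in_Tpoly_mult[OF qlo] by metis
next
  case (add A B)
  then obtain L1 L2 where "terms_in P L1" "A = Tpoly P L1" "terms_in P L2" "B = Tpoly P L2" by blast
  then show ?case using op_add_Tpoly[of P L1 L2] by (intro exI[of _ "L1 @ L2"]) (auto simp: terms_in_def)
next
  case (scale A c)
  then obtain L where "terms_in P L" "A = Tpoly P L" by blast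
  then show ?case using op_scale_Tpoly[of c P L]
    by (intro exI[of _ "map (term_scale c) L"]) (auto simp: terms_in_def term_scale_def)
qed

lemma bdd_op_op_diff:
  assumes A: "bdd_op P A" and B: "bdd_op P B"
  shows "bdd_op P (op_diff A B)"
  unfolding bdd_op_def
proof (intro conjI)
  have diff: "op_diff A B f = (\<lambda>t. 1 * A f t + (-1) * B f t)" for f
    by (simp add: op_diff_def)
  show "\<forall>f. f \<notin> l2 P \<longrightarrow> op_diff A B f = (\<lambda>t. 0)"
    using A B by (simp add: bdd_op_def op_diff_def)
  show "\<forall>f\<in>l2 P. op_diff A B f \<in> l2 P"
    using A B unfolding diff bdd_op_def by (blast intro: l2_lincomb(1))
  show "\<forall>f\<in>l2 P. \<forall>g\<in>l2 P. \<forall>a b. op_diff A B (\<lambda>t. a * f t + b * g t) = (\<lambda>t. a * op_diff A B f t + b * op_diff A B g t)"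
    using A B by (simp add: bdd_op_def op_diff_def algebra_simps)
  obtain CA CB where CA: "\<forall>f\<in>l2 P. l2norm P (A f) \<le> CA * l2norm P f"
    and CB: "\<forall>f\<in>l2 P. l2norm P (B f) \<le> CB * l2norm P f"
    using A B by (auto simp: bdd_op_def)
  show "\<exists>C. \<forall>f\<in>l2 P. l2norm P (op_diff A B f) \<le> C * l2norm P f"
  proof (intro exI ballI)
    fix f assume f: "f \<in> l2 P"
    have "(l2norm P (A f))^2 \<le> (CA * l2norm P f)^2" "(l2norm P (B f))^2 \<le> (CB * l2norm P f)^2"
      using CA CB f by (auto intro!: power_mono simp: l2norm_nonneg)
    moreover have "(l2norm P (op_diff A B f))^2 \<le> 2 * (l2norm P (A f))^2 + 2 * (l2norm P (B f))^2"
      using l2_lincomb(2)[of "A f" P "B f" 1 "-1"] A B f unfolding diff bdd_op_def by simp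
    ultimately have "(l2norm P (op_diff A B f))^2 \<le> (sqrt (2 * CA^2 + 2 * CB^2) * l2norm P f)^2"
      by (simp add: algebra_simps)
    then show "l2norm P (op_diff A B f) \<le> sqrt (2 * CA^2 + 2 * CB^2) * l2norm P f"
      by (rule power2_le_imp_le) (simp add: l2norm_nonneg)
  qed
qed

lemma bdd_op_zero:
  assumes "bdd_op P A"
  shows "A (\<lambda>t. 0) = (\<lambda>t. 0)"
proof -
  have "\<forall>f\<in>l2 P. \<forall>g\<in>l2 P. \<forall>a b. A (\<lambda>t. a * f t + b * g t) = (\<lambda>t. a * A f t + b * A g t)"
    using assms unfolding bdd_op_def by (elim conjE)
  from this[rule_format, OF l2_zero l2_zero, of 0 0] show ?thesis by simp
qed

lemma l2norm_le_opnorm: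
  assumes A: "bdd_op P A" and f: "f \<in> l2 P" "l2norm P f \<le> 1"
  shows "l2norm P (A f) \<le> opnorm P A"
  unfolding opnorm_def
proof (rule cSup_upper)
  show "l2norm P (A f) \<in> {l2norm P (A f) | f. f \<in> l2 P \<and> l2norm P f \<le> 1}" using f by blast
  obtain C where C: "\<forall>f\<in>l2 P. l2norm P (A f) \<le> C * l2norm P f" using A by (auto simp: bdd_op_def)
  have "l2norm P (A g) \<le> \<bar>C\<bar>" if "g \<in> l2 P" "l2norm P g \<le> 1" for g
  proof -
    have "l2norm P (A g) \<le> C * l2norm P g" using C that(1) by blast
    also have "\<dots> \<le> \<bar>C\<bar> * l2norm P g" by (simp add: mult_right_mono l2norm_nonneg)
    also have "\<dots> \<le> \<bar>C\<bar>" using that(2) l2norm_nonneg[of P g] by (simp add: mult_left_le)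
    finally show ?thesis .
  qed
  then show "bdd_above {l2norm P (A f) | f. f \<in> l2 P \<and> l2norm P f \<le> 1}"
    by (intro bdd_aboveI[where M="\<bar>C\<bar>"]) blast
qed

lemma cmod_diag_le_opnorm:
  assumes "bdd_op P A" "x \<in> P"
  shows "cmod (A (eps x) x) \<le> opnorm P A"
proof -
  have "A (eps x) \<in> l2 P" using assms eps_l2 by (auto simp: bdd_op_def)
  then have "cmod (A (eps x) x) \<le> l2norm P (A (eps x))" using assms(2) by (rule cmod_le_l2norm)
  also have "\<dots> \<le> opnorm P A"
    using assms by (intro l2norm_le_opnorm) (simp_all add: eps_l2 l2norm_eps)
  finally show ?thesis .
qed

lemma Tpoly_diag_eq:
  assumes qlo: "quasi_lattice_ordered P" and L: "terms_in P L" and p: "p \<in> P"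
    and avoid: "\<And>c a b. (c, a, b) \<in> set L \<Longrightarrow> a \<noteq> 0 \<Longrightarrow> -a + p \<notin> P"
  shows "Tpoly P L (eps p) p = Tpoly P L (eps 0) 0"
proof -
  have "Tterm P x (eps p) p = Tterm P x (eps 0) 0" if "x \<in> set L" for x
  proof -
    obtain c a b where x: "x = (c, a, b)" by (cases x)
    have a: "a \<in> P" using that L unfolding x terms_in_def by auto
    show ?thesis
    proof (cases "a = 0")
      case True
      have "b + p = p \<longleftrightarrow> b = 0" by (metis add.left_neutral add_right_cancel)
      then show ?thesis using quasi_lattice_ordered_zero[OF qlo] p True by (simp add: x Tterm_def eps_def)
    next
      case False
      then have "-a \<notin> P" "-a + p \<notin> P"
        using quasi_lattice_ordered_minus_eq_zero[OF qlo a] avoid[of c a b] that x by auto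
      then show ?thesis by (simp add: x Tterm_def)
    qed
  qed
  then have "(\<Sum>x\<leftarrow>L. Tterm P x (eps p) p) = (\<Sum>x\<leftarrow>L. Tterm P x (eps 0) 0)"
    by (intro arg_cong[where f=sum_list] map_cong) simp_all
  then show ?thesis
    using eps_l2[OF quasi_lattice_ordered_zero[OF qlo]] eps_l2[OF p] by (simp add: Tpoly_def)
qed

lemma has_FESSPE_if_cover:
  assumes qlo: "quasi_lattice_ordered P" and F: "finite F" "F \<subseteq> P - {0}"
    and cover: "\<And>p. p \<in> P - {0} \<Longrightarrow> \<exists>a\<in>F. -a + p \<in> P"
  shows "has_FESSPE P"
proof -
  have "{f + p | f p. f \<in> F \<and> p \<in> P} \<subseteq> P - {0}"
  proof
    fix x assume "x \<in> {f + p | f p. f \<in> F \<and> p \<in> P}"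
    then obtain f p where x: "x = f + p" and f: "f \<in> P" "f \<noteq> 0" and p: "p \<in> P" using F by blast
    have "x \<noteq> 0"
    proof
      assume "x = 0"
      then have "-p = f" using x by (simp add: add_eq_0_iff2)
      then show False using quasi_lattice_ordered_minus_eq_zero[OF qlo p] f by simp
    qed
    then show "x \<in> P - {0}"
      using plus_closedD[OF quasi_lattice_ordered_plus_closed[OF qlo] f(1) p] x by simp
  qed
  moreover have "P - {0} \<subseteq> {f + p | f p. f \<in> F \<and> p \<in> P}"
  proof
    fix p assume "p \<in> P - {0}"
    then obtain a where "a \<in> F" "-a + p \<in> P" using cover by blast
    moreover have "p = a + (-a + p)" by (simp add: add.assoc[symmetric])
    ultimately show "p \<in> {f + p | f p. f \<in> F \<and> p \<in> P}" by blast
  qed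
  ultimately show ?thesis using F unfolding has_FESSPE_def by blast
qed

lemma Toeplitz_diag_approx:
  assumes qlo: "quasi_lattice_ordered P" and Q: "Q \<in> Toeplitz P" and e: "e > 0"
  obtains L where "terms_in P L"
    and "\<And>x. x \<in> P \<Longrightarrow> cmod (Q (eps x) x - Tpoly P L (eps x) x) < e"
proof -
  have bdd: "bdd_op P Q" and approx: "\<forall>e>0. \<exists>B\<in>star_alg P. opnorm P (op_diff Q B) < e"
    using Q by (auto simp: Toeplitz_def norm_closure_def)
  obtain B where "B \<in> star_alg P" and B: "opnorm P (op_diff Q B) < e"
    using approx e by blast
  then obtain L where L: "terms_in P L" and BL: "B = Tpoly P L"
    using star_alg_eq_Tpoly[OF qlo] by blast
  have diff: "bdd_op P (op_diff Q B)"
    unfolding BL using bdd bdd_op_Tpoly[OF quasi_lattice_ordered_plus_closed[OF qlo] L]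
    by (rule bdd_op_op_diff)
  have "cmod (Q (eps x) x - Tpoly P L (eps x) x) < e" if x: "x \<in> P" for x
    using cmod_diag_le_opnorm[OF diff x] B unfolding BL op_diff_def by simp
  with L show thesis by (rule that)
qed

lemma has_FESSPE_if_Toeplitz_diag:
  assumes qlo: "quasi_lattice_ordered P" and Q: "Q \<in> Toeplitz P"
    and diag0: "Q (eps 0) 0 = 1" and diag: "\<And>p. p \<in> P - {0} \<Longrightarrow> Q (eps p) p = 0"
  shows "has_FESSPE P"
proof -
  obtain L where L: "terms_in P L"
    and close: "\<And>x. x \<in> P \<Longrightarrow> cmod (Q (eps x) x - Tpoly P L (eps x) x) < 1/2"
    using Toeplitz_diag_approx[OF qlo Q, of "1/2"] by auto
  define F where "F = fst ` snd ` set L - {0}"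
  have "finite F" by (simp add: F_def)
  moreover have "F \<subseteq> P - {0}"
  proof
    fix a assume "a \<in> F"
    then obtain x where "x \<in> set L" "a = fst (snd x)" "a \<noteq> 0" by (auto simp: F_def)
    then show "a \<in> P - {0}" using L by (cases x) (auto simp: terms_in_def)
  qed
  moreover have "\<exists>a\<in>F. -a + p \<in> P" if p: "p \<in> P - {0}" for p
  proof (rule ccontr)
    assume none: "\<not> (\<exists>a\<in>F. -a + p \<in> P)"
    have "-a + p \<notin> P" if "(c, a, b) \<in> set L" "a \<noteq> 0" for c a b
    proof -
      have "(a, b) \<in> snd ` set L" using that(1) by (rule image_eqI[rotated]) simp
      then have "a \<in> fst ` snd ` set L" by (rule image_eqI[rotated]) simp
      then show ?thesis using none that(2) unfolding F_def by blast
    qed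
    then have "Tpoly P L (eps p) p = Tpoly P L (eps 0) 0"
      using p by (intro Tpoly_diag_eq[OF qlo L]) auto
    moreover have "cmod (Tpoly P L (eps p) p) < 1/2" using close[of p] diag[OF p] p by simp
    moreover have "cmod (1 - Tpoly P L (eps 0) 0) < 1/2"
      using close[OF quasi_lattice_ordered_zero[OF qlo]] diag0 by simp
    moreover have "cmod (1 :: complex) \<le> cmod (1 - Tpoly P L (eps 0) 0) + cmod (Tpoly P L (eps 0) 0)"
      by (metis diff_add_cancel norm_triangle_ineq)
    ultimately show False by simp
  qed
  ultimately show ?thesis by (rule has_FESSPE_if_cover[OF qlo])
qed

lemma norm_closure_superset:
  assumes "bdd_op P A" "A \<in> S"
  shows "A \<in> norm_closure P S"
proof -
  have "{l2norm P (op_diff A A f) | f. f \<in> l2 P \<and> l2norm P f \<le> 1} = {0}"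
    by (auto simp: op_diff_def l2norm_def intro!: exI[of _ "\<lambda>t. 0"])
  then have "opnorm P (op_diff A A) = 0" by (simp add: opnorm_def)
  then show ?thesis using assms by (auto simp: norm_closure_def intro!: bexI[of _ A])
qed

lemma range_proj_Tgen:
  assumes qlo: "quasi_lattice_ordered P" and u: "u \<in> P"
  shows "Tgen P u \<circ> adj P (Tgen P u) = Tpoly P [(1, u, u)]"
proof -
  have zero: "0 \<in> P" using quasi_lattice_ordered_zero[OF qlo] .
  have L: "terms_in P [(1, u, 0)]" using u zero by (simp add: terms_in_def)
  have ub: "has_common_ub P 0 0" using zero by (auto simp: has_common_ub_def)
  have "lub P 0 0 = 0"
    using quasi_lattice_ordered_minus_eq_zero[OF qlo lub_is_lub(1)[OF qlo zero zero ub]]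
      lub_is_lub(4)[OF qlo zero zero ub zero] zero by simp
  then have "Tpoly_mult P [(1, u, 0)] (map term_adj [(1, u, 0)]) = [(1, u, u)]"
    by (simp add: Tpoly_mult_def term_adj_def term_mult_def ub)
  moreover have "terms_in P (map term_adj [(1, u, 0)])" using u zero by (simp add: terms_in_def term_adj_def)
  ultimately show ?thesis
    using Tpoly_comp[OF qlo L] adj_Tpoly[OF quasi_lattice_ordered_plus_closed[OF qlo] L]
    by (simp add: Tgen_eq_Tpoly)
qed

lemma range_proj_Tgen_in_Dalg:
  assumes qlo: "quasi_lattice_ordered P" and u: "u \<in> P"
  shows "Tpoly P [(1, u, u)] \<in> Dalg P"
  unfolding Dalg_def
proof (rule norm_closure_superset)
  show "bdd_op P (Tpoly P [(1, u, u)])"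
    using u by (intro bdd_op_Tpoly quasi_lattice_ordered_plus_closed[OF qlo]) (simp add: terms_in_def)
  show "Tpoly P [(1, u, u)] \<in> Dspan P"
    unfolding Dspan_def using u
    by (intro CollectI exI[of _ "{u}"] exI[of _ "\<lambda>_. 1"]) (simp add: range_proj_Tgen[OF qlo u])
qed

lemma Dcomm_eps0_eigenvector:
  assumes qlo: "quasi_lattice_ordered P" and Q: "Q \<in> Dcomm P"
  shows "Q (eps 0) = (\<lambda>u. Q (eps 0) 0 * eps 0 u)"
proof
  fix u
  have zero: "0 \<in> P" using quasi_lattice_ordered_zero[OF qlo] .
  have Qeps: "Q (eps 0) \<in> l2 P" using Q eps_l2[OF zero] by (auto simp: Dcomm_def bdd_op_def)
  have "Q (eps 0) u = 0" if "u \<noteq> 0"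
  proof (cases "u \<in> P")
    case False
    then show ?thesis using l2_vanishes[OF Qeps] by simp
  next
    case True
    let ?E = "Tpoly P [(1, u, u)]"
    have "Q \<circ> ?E = ?E \<circ> Q"
      using Q range_proj_Tgen_in_Dalg[OF qlo True] by (auto simp: Dcomm_def)
    moreover have "?E (eps 0) = (\<lambda>t. 0)"
    proof
      fix t
      show "?E (eps 0) t = 0"
        using quasi_lattice_ordered_minus_eq_zero[OF qlo True] that eps_l2[OF zero]
        by (cases "t = 0") (auto simp: Tpoly_def Tterm_def eps_def)
    qed
    moreover have "Q (\<lambda>t. 0) = (\<lambda>t. 0)"
      using Q bdd_op_zero unfolding Dcomm_def by blast
    ultimately have "?E (Q (eps 0)) u = 0" by (metis comp_apply)
    then show ?thesis using Qeps zero by (simp add: Tpoly_def Tterm_def)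
  qed
  then show "Q (eps 0) u = Q (eps 0) 0 * eps 0 u" by (simp add: eps_def)
qed

lemma proj_eigenvalue_0_or_1:
  assumes Q: "is_proj P Q" and v: "v \<in> l2 P" and eig: "Q v = (\<lambda>t. c * v t)" and "v s \<noteq> 0"
  shows "c = 0 \<or> c = 1"
proof -
  have "Q (\<lambda>t. c * v t + 0 * v t) = (\<lambda>t. c * Q v t + 0 * Q v t)"
    using Q v unfolding is_proj_def bdd_op_def by blast
  then have "Q (Q v) = (\<lambda>t. c * (c * v t))" by (simp add: eig)
  moreover have "Q (Q v) = Q v" using Q by (metis comp_apply is_proj_def)
  ultimately have "c * (c * v s) = 1 * (c * v s)" using eig by (metis mult_1)
  then show ?thesis using \<open>v s \<noteq> 0\<close> by (metis mult_cancel_right mult_eq_0_iff)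
qed

lemma exists_proj_fixing_eps0:
  assumes qlo: "quasi_lattice_ordered P"
    and proj: "\<forall>x. is_proj P (q x)" and comm: "\<forall>y. q y \<in> Dcomm P"
    and total: "\<forall>f\<in>l2 P. \<forall>g\<in>l2 P. ((\<lambda>y. l2inner P (q y f) g) has_sum l2inner P f g) UNIV"
  shows "\<exists>y. q y (eps 0) = eps 0"
proof (rule ccontr)
  assume none: "\<nexists>y. q y (eps 0) = eps 0"
  have zero: "0 \<in> P" using quasi_lattice_ordered_zero[OF qlo] .
  have "q y (eps 0) 0 = 0" for y
  proof -
    define \<alpha> where "\<alpha> = q y (eps 0) 0"
    have eig: "q y (eps 0) = (\<lambda>t. \<alpha> * eps 0 t)"
      unfolding \<alpha>_def using Dcomm_eps0_eigenvector[OF qlo] comm by blast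
    have "\<alpha> = 0 \<or> \<alpha> = 1"
      using proj_eigenvalue_0_or_1[OF proj[rule_format] eps_l2[OF zero] eig, where s=0]
      by (simp add: eps_def)
    moreover have "\<alpha> \<noteq> 1"
    proof
      assume "\<alpha> = 1"
      with eig have "q y (eps 0) = eps 0" by simp
      with none show False by blast
    qed
    ultimately show ?thesis unfolding \<alpha>_def by blast
  qed
  moreover have "((\<lambda>y. q y (eps 0) 0) has_sum 1) UNIV"
    using total[rule_format, OF eps_l2[OF zero] eps_l2[OF zero]]
    unfolding l2inner_eps[OF zero] by (simp add: eps_def)
  ultimately show False using has_sum_unique[of "\<lambda>y. q y (eps 0) 0" UNIV 0 1] by simp
qed

lemma Tgen_eps:
  assumes "s \<in> P"
  shows "Tgen P p (eps s) = eps (p + s)"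
proof
  fix u
  have "-p + u = s \<longleftrightarrow> u = p + s" by (metis add_minus_cancel minus_add_cancel)
  then show "Tgen P p (eps s) u = eps (p + s) u"
    using assms eps_l2[OF assms] by (auto simp: Tgen_def eps_def)
qed

lemma proj_diag_vanishes:
  assumes zero: "0 \<in> P"
    and orth: "\<forall>x y. x \<noteq> y \<longrightarrow> q x \<circ> q y = (\<lambda>f t. 0)"
    and cov: "\<forall>y. \<forall>p\<in>P. Tgen P p \<circ> q y = q (p + y) \<circ> Tgen P p"
    and fixed: "q y (eps 0) = eps 0" and p: "p \<in> P" "p \<noteq> 0"
  shows "q y (eps p) p = 0"
proof -
  have "Tgen P p (q y (eps 0)) = q (p + y) (Tgen P p (eps 0))"
    using cov p(1) by (metis comp_apply)
  then have "q (p + y) (eps p) = eps p"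
    using fixed Tgen_eps[OF zero, where p=p] by (metis add.right_neutral)
  moreover have "q y (q (p + y) f) = (\<lambda>t. 0)" for f
  proof -
    have "y \<noteq> p + y" using p(2) by (metis add.left_neutral add_right_cancel)
    then show ?thesis using orth by (metis comp_apply)
  qed
  ultimately have "q y (eps p) = (\<lambda>t. 0)" by metis
  then show ?thesis by simp
qed

theorem theorem6p10:
  fixes P :: "'g::group_add set" and q :: "'g \<Rightarrow> 'g oper"
  assumes "quasi_lattice_ordered P"
    and "\<forall>x. q x \<in> Toeplitz P"
    and "\<forall>x. is_proj P (q x)"
    and "\<forall>x y. x \<noteq> y \<longrightarrow> q x \<circ> q y = (\<lambda>f t. 0)"
    and "\<forall>y. q y \<in> Dcomm P"
    and "\<forall>y. \<forall>p\<in>P. Tgen P p \<circ> q y = q (p + y) \<circ> Tgen P p"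
    and "\<forall>f\<in>l2 P. \<forall>g\<in>l2 P. ((\<lambda>y. l2inner P (q y f) g) has_sum l2inner P f g) UNIV"
  shows "has_FESSPE P"
proof -
  have zero: "0 \<in> P" using quasi_lattice_ordered_zero[OF assms(1)] .
  obtain y where fixed: "q y (eps 0) = eps 0"
    using exists_proj_fixing_eps0[OF assms(1,3,5,7)] by blast
  show ?thesis
  proof (rule has_FESSPE_if_Toeplitz_diag[OF assms(1)])
    show "q y \<in> Toeplitz P" using assms(2) by blast
    show "q y (eps 0) 0 = 1" using fixed by (simp add: eps_def)
    show "q y (eps p) p = 0" if "p \<in> P - {0}" for p
      using proj_diag_vanishes[OF zero assms(4,6) fixed] that by blast
  qed
qed

end
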